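(* Let $m\ge 2$, let $n_1,\dots,n_m\ge 4$ be even, and let $\mathcal{C}=\mathcal{C}(C_{n_1},\dots,C_{n_m})$ be the even chain cycle. Then the vertex cover number of its strong resolving graph is $$\alpha(\mathcal{C}_{SR})=1+\sum_{i=1}^{m}\frac{n_i-2}{2}.$$
   Context: Let $C_{n_1},\dots,C_{n_m}$ be pairwise disjoint cycles, $V(C_{n_i})=\{v^i_1,\dots,v^i_{n_i}\}$ with $v^i_j$ adjacent to $v^i_{j+1}$ (indices mod $n_i$). The even chain cycle (all $n_i$ even) is obtained by identifying $v^i_{n_i/2+1}$ with $v^{i+1}_1$ for $i=1,\dots,m-1$. A vertex $u$ is maximally distant from $v$ if every neighbor $w$ of $u$ satisfies $d(v,w)\le d(u,v)$; $u,v$ are mutually maximally distant if each is maximally distant from the other. The strong resolving graph $G_{SR}$ of a connected graph $G$ has vertex set $V(G)$, with $u,v$ adjacent iff they are mutually maximally distant in $G$. $\alpha(H)$ denotes the minimum size of a vertex cover of $H$. *)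

theory Defs
  imports Main
begin

inductive walk :: "('a \<Rightarrow> 'a \<Rightarrow> bool) \<Rightarrow> nat \<Rightarrow> 'a \<Rightarrow> 'a \<Rightarrow> bool"
  for E where
  walk_nil: "walk E 0 u u"
| walk_cons: "E u w \<Longrightarrow> walk E k w v \<Longrightarrow> walk E (Suc k) u v"

definition gdist :: "('a \<Rightarrow> 'a \<Rightarrow> bool) \<Rightarrow> 'a \<Rightarrow> 'a \<Rightarrow> nat" where
  "gdist E u v = (LEAST k. walk E k u v)"

definition max_distant :: "('a \<Rightarrow> 'a \<Rightarrow> bool) \<Rightarrow> 'a \<Rightarrow> 'a \<Rightarrow> bool" where
  "max_distant E u v \<longleftrightarrow> (\<forall>w. E u w \<longrightarrow> gdist E v w \<le> gdist E u v)"

definition mutually_max_distant :: "('a \<Rightarrow> 'a \<Rightarrow> bool) \<Rightarrow> 'a \<Rightarrow> 'a \<Rightarrow> bool" where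
  "mutually_max_distant E u v \<longleftrightarrow> max_distant E u v \<and> max_distant E v u"

definition strong_resolving_adj :: "'a set \<Rightarrow> ('a \<Rightarrow> 'a \<Rightarrow> bool) \<Rightarrow> 'a \<Rightarrow> 'a \<Rightarrow> bool" where
  "strong_resolving_adj V E u v \<longleftrightarrow> u \<in> V \<and> v \<in> V \<and> mutually_max_distant E u v"

definition is_vertex_cover :: "'a set \<Rightarrow> ('a \<Rightarrow> 'a \<Rightarrow> bool) \<Rightarrow> 'a set \<Rightarrow> bool" where
  "is_vertex_cover V E S \<longleftrightarrow> S \<subseteq> V \<and> (\<forall>u\<in>V. \<forall>v\<in>V. E u v \<longrightarrow> u \<in> S \<or> v \<in> S)"

definition vertex_cover_number :: "'a set \<Rightarrow> ('a \<Rightarrow> 'a \<Rightarrow> bool) \<Rightarrow> nat" where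
  "vertex_cover_number V E = Min {card S | S. is_vertex_cover V E S}"

text \<open>Cycles indexed i = 0..m-1; vertex v^{i+1}_{j+1} of the paper is (i,j), j < n i.
  The vertex (i,0) for i \<ge> 1 (i.e. v^{i+1}_1) is identified with (i-1, n(i-1) div 2)
  (i.e. v^{i}_{n_i/2+1}); canon picks the representative.\<close>
definition chain_canon :: "(nat \<Rightarrow> nat) \<Rightarrow> nat \<times> nat \<Rightarrow> nat \<times> nat" where
  "chain_canon n p = (if snd p = 0 \<and> fst p > 0 then (fst p - 1, n (fst p - 1) div 2) else p)"

definition chain_vertices :: "nat \<Rightarrow> (nat \<Rightarrow> nat) \<Rightarrow> (nat \<times> nat) set" where
  "chain_vertices m n = chain_canon n ` {(i, j). i < m \<and> j < n i}"

definition chain_adj :: "nat \<Rightarrow> (nat \<Rightarrow> nat) \<Rightarrow> nat \<times> nat \<Rightarrow> nat \<times> nat \<Rightarrow> bool" where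
  "chain_adj m n u v \<longleftrightarrow> (\<exists>i j. i < m \<and> j < n i \<and>
      ((u = chain_canon n (i, j) \<and> v = chain_canon n (i, (j + 1) mod n i)) \<or>
       (v = chain_canon n (i, j) \<and> u = chain_canon n (i, (j + 1) mod n i))))"

end

theory Submission
  imports Defs
begin

text \<open>
  Upper bound: call the vertices (i, a) with n_i/2 \<le> a < n_i the lower arcs; they all lie on
  geodesics starting at v^1_1, and their distance from v^1_1 is a 1-Lipschitz potential. Of two
  lower-arc vertices, the one closer to v^1_1 has a neighbour even closer, hence farther from the
  other vertex; so no two lower-arc vertices are mutually maximally distant, and the remaining
  vertices, namely v^1_1 and the interior vertices of the upper arcs, form a vertex cover.

  Lower bound: antipodal vertices of one cycle off the cut vertices are mutually maximally
  distant, and so are the two ends v^1_1 and v^m_{n_m/2+1} of the chain, whose distance is the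
  diameter. These pairs form a matching of the required size in the strong resolving graph, and
  every vertex cover contains an endpoint of each matching edge.
\<close>

lemma walk_snoc: "walk E k u v \<Longrightarrow> E v w \<Longrightarrow> walk E (Suc k) u w"
  by (induction rule: walk.induct) (auto intro: walk.intros)

lemma walk_append: "walk E k u v \<Longrightarrow> walk E l v w \<Longrightarrow> walk E (k + l) u w"
  by (induction rule: walk.induct) (auto intro: walk.intros)

lemma walk_sym:
  assumes "\<And>x y. E x y \<Longrightarrow> E y x"
  shows "walk E k u v \<Longrightarrow> walk E k v u"
  by (induction rule: walk.induct) (auto intro: walk.intros walk_snoc assms)

lemma gdist_le_walk: "walk E k u v \<Longrightarrow> gdist E u v \<le> k"
  unfolding gdist_def by (rule Least_le)

lemma le_gdistI:
  assumes "walk E k u v" and "\<And>l. walk E l u v \<Longrightarrow> d \<le> l"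
  shows "d \<le> gdist E u v"
proof -
  have "walk E (gdist E u v) u v"
    unfolding gdist_def using assms(1) by (rule LeastI)
  then show ?thesis by (rule assms(2))
qed

lemma gdist_sym:
  assumes "\<And>x y. E x y \<Longrightarrow> E y x"
  shows "gdist E u v = gdist E v u"
proof -
  have "walk E k u v \<longleftrightarrow> walk E k v u" for k
    using walk_sym[of E, OF assms] by blast
  then show ?thesis unfolding gdist_def by simp
qed

lemma walk_potential_bound:
  fixes f :: "'a \<Rightarrow> nat"
  assumes "\<And>x y. E x y \<Longrightarrow> f y \<le> f x + 1"
  shows "walk E k u v \<Longrightarrow> f v \<le> f u + k"
  by (induction rule: walk.induct) (use assms in fastforce)+

definition is_matching :: "('a \<Rightarrow> 'a \<Rightarrow> bool) \<Rightarrow> ('a \<times> 'a) set \<Rightarrow> bool" where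
  "is_matching E M \<longleftrightarrow> (\<forall>(u, v) \<in> M. E u v) \<and>
     (\<forall>p \<in> M. \<forall>q \<in> M. p \<noteq> q \<longrightarrow> {fst p, snd p} \<inter> {fst q, snd q} = {})"

lemma card_matching_le_vertex_cover:
  assumes cover: "is_vertex_cover V E S" and "finite V"
    and "M \<subseteq> V \<times> V" and matching: "is_matching E M"
  shows "card M \<le> card S"
proof -
  define pick where "pick p = (if fst p \<in> S then fst p else snd p)" for p
  have pick_mem: "pick p \<in> {fst p, snd p}" for p
    unfolding pick_def by simp
  have "pick p \<in> S" if "p \<in> M" for p
  proof -
    from that \<open>M \<subseteq> V \<times> V\<close> matching have "fst p \<in> V" "snd p \<in> V" "E (fst p) (snd p)"
      unfolding is_matching_def by auto
    with cover have "fst p \<in> S \<or> snd p \<in> S"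
      unfolding is_vertex_cover_def by blast
    then show ?thesis unfolding pick_def by auto
  qed
  then have "pick ` M \<subseteq> S" by blast
  moreover have "inj_on pick M"
  proof (rule inj_onI)
    fix p q assume "p \<in> M" "q \<in> M" "pick p = pick q"
    then have "pick p \<in> {fst p, snd p} \<inter> {fst q, snd q}"
      using pick_mem[of p] pick_mem[of q] by simp
    with \<open>p \<in> M\<close> \<open>q \<in> M\<close> matching show "p = q"
      unfolding is_matching_def by blast
  qed
  moreover have "finite S"
    using cover \<open>finite V\<close> finite_subset unfolding is_vertex_cover_def by blast
  ultimately show ?thesis
    using card_image card_mono by metis
qed

lemma vertex_cover_number_eqI:
  assumes "finite V" and "is_vertex_cover V E S"
    and "\<And>S'. is_vertex_cover V E S' \<Longrightarrow> card S \<le> card S'"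
  shows "vertex_cover_number V E = card S"
  unfolding vertex_cover_number_def
proof (rule Min_eqI)
  show "finite {card S |S. is_vertex_cover V E S}"
    by (rule finite_subset[of _ "card ` Pow V"]) (use \<open>finite V\<close> in \<open>auto simp: is_vertex_cover_def\<close>)
qed (use assms in auto)

definition chain_offset :: "(nat \<Rightarrow> nat) \<Rightarrow> nat \<Rightarrow> nat" where
  "chain_offset n i = (\<Sum>l<i. n l div 2)"

lemma chain_offset_Suc: "chain_offset n (Suc i) = chain_offset n i + n i div 2"
  by (simp add: chain_offset_def)

lemma chain_offset_mono: "i \<le> k \<Longrightarrow> chain_offset n i \<le> chain_offset n k"
  unfolding chain_offset_def by (rule sum_mono2) auto

lemma chain_canon_pos: "0 < j \<Longrightarrow> chain_canon n (i, j) = (i, j)"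
  by (simp add: chain_canon_def)

lemma chain_canon_Suc_0: "chain_canon n (Suc i, 0) = (i, n i div 2)"
  by (simp add: chain_canon_def)

lemma chain_canon_0_0: "chain_canon n (0, 0) = (0, 0)"
  by (simp add: chain_canon_def)

lemma chain_adj_sym: "chain_adj m n u v \<Longrightarrow> chain_adj m n v u"
  unfolding chain_adj_def by blast

lemma chain_adj_step:
  "i < m \<Longrightarrow> j < n i \<Longrightarrow>
     chain_adj m n (chain_canon n (i, j)) (chain_canon n (i, (j + 1) mod n i))"
  unfolding chain_adj_def by blast

lemma chain_adjE:
  assumes "chain_adj m n u v"
  obtains i j where "i < m" "j < n i" "u = chain_canon n (i, j)" "v = chain_canon n (i, (j + 1) mod n i)"
    | i j where "i < m" "j < n i" "v = chain_canon n (i, j)" "u = chain_canon n (i, (j + 1) mod n i)"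
  using assms unfolding chain_adj_def by blast

lemma walk_around_cycle:
  assumes "i < m" "a < n i"
  shows "walk (chain_adj m n) k (chain_canon n (i, a)) (chain_canon n (i, (a + k) mod n i))"
proof (induction k)
  case 0
  show ?case using assms by (simp add: walk_nil)
next
  case (Suc k)
  have "chain_adj m n (chain_canon n (i, (a + k) mod n i))
          (chain_canon n (i, ((a + k) mod n i + 1) mod n i))"
    using assms by (intro chain_adj_step) auto
  then show ?case using Suc walk_snoc by (fastforce simp: mod_Suc_eq)
qed

lemma chain_walk_potential_bound:
  fixes f :: "nat \<times> nat \<Rightarrow> nat"
  assumes canon: "\<And>k j. k < m \<Longrightarrow> j < n k \<Longrightarrow> f (chain_canon n (k, j)) = f (k, j)"
    and step: "\<And>k j. k < m \<Longrightarrow> j < n k \<Longrightarrow>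
      f (k, j) \<le> f (k, (j + 1) mod n k) + 1 \<and> f (k, (j + 1) mod n k) \<le> f (k, j) + 1"
    and walk: "walk (chain_adj m n) l p q"
  shows "f q \<le> f p + l"
proof (rule walk_potential_bound[OF _ walk])
  fix x y assume "chain_adj m n x y"
  then show "f y \<le> f x + 1"
  proof (cases rule: chain_adjE)
    case (1 k j)
    then show ?thesis using step[of k j] by (simp add: canon)
  next
    case (2 k j)
    then show ?thesis using step[of k j] by (simp add: canon)
  qed
qed

locale even_chain_cycle =
  fixes m :: nat and n :: "nat \<Rightarrow> nat"
  assumes two_le_m: "2 \<le> m"
    and cycle_lengths: "\<forall>i<m. n i \<ge> 4 \<and> even (n i)"
begin

abbreviation "adj \<equiv> chain_adj m n"
abbreviation "vtx i j \<equiv> chain_canon n (i, j)"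
abbreviation "V \<equiv> chain_vertices m n"

lemma four_le_n: "i < m \<Longrightarrow> 4 \<le> n i"
  using cycle_lengths by auto

lemma n_eq_double_half: "i < m \<Longrightarrow> n i = 2 * (n i div 2)"
  using cycle_lengths by auto

lemma walk_rev: "walk adj k u v \<Longrightarrow> walk adj k v u"
  by (rule walk_sym) (rule chain_adj_sym)

lemma cycle_arc_walk:
  assumes "i < m" "b \<le> a" "a < n i"
  shows "walk adj (a - b) (vtx i b) (vtx i a)"
  using walk_around_cycle[of i m b n "a - b"] assms by simp

lemma cycle_wrap_walk:
  assumes "i < m" "0 < a" "a < n i"
  shows "walk adj (n i - a) (vtx i a) (vtx i 0)"
  using walk_around_cycle[of i m a n "n i - a"] assms by simp

lemma cycle_walk_within_half:
  assumes "i < m" "a < n i" "b < n i"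
  obtains k where "k \<le> n i div 2" "walk adj k (vtx i a) (vtx i b)"
proof -
  have short: "\<exists>k \<le> n i div 2. walk adj k (vtx i a) (vtx i b)" if "b \<le> a" "a < n i" for a b
  proof (cases "a - b \<le> n i div 2")
    case True
    then show ?thesis using walk_rev[OF cycle_arc_walk[OF assms(1) that]] by blast
  next
    case False
    then have "0 < a" by simp
    have "walk adj (n i - a + (b - 0)) (vtx i a) (vtx i b)"
      using walk_append[OF cycle_wrap_walk cycle_arc_walk] assms(1) \<open>0 < a\<close> that by simp
    moreover have "n i - a + (b - 0) \<le> n i div 2"
      using False that n_eq_double_half[OF assms(1)] by linarith
    ultimately show ?thesis by blast
  qed
  have "\<exists>k \<le> n i div 2. walk adj k (vtx i a) (vtx i b)"
  proof (cases "b \<le> a")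
    case True
    then show ?thesis using short assms by blast
  next
    case False
    then show ?thesis using short[of a b] assms walk_rev by (meson nat_le_linear)
  qed
  then show ?thesis using that by blast
qed

lemma walk_along_chain:
  "i \<le> k \<Longrightarrow> k < m \<Longrightarrow> walk adj (chain_offset n k - chain_offset n i) (vtx i 0) (vtx k 0)"
proof (induction k)
  case 0
  then show ?case by (auto intro: walk_nil)
next
  case (Suc k)
  show ?case
  proof (cases "i = Suc k")
    case True
    then show ?thesis by (auto intro: walk_nil)
  next
    case False
    with Suc.prems have "i \<le> k" "k < m" by auto
    have "walk adj (chain_offset n k - chain_offset n i + (n k div 2 - 0)) (vtx i 0) (vtx k (n k div 2))"
      using walk_append[OF Suc.IH cycle_arc_walk] \<open>i \<le> k\<close> \<open>k < m\<close> four_le_n[of k] by simp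
    moreover have "vtx k (n k div 2) = vtx (Suc k) 0"
      using four_le_n[of k] \<open>k < m\<close> by (simp add: chain_canon_pos chain_canon_Suc_0)
    ultimately show ?thesis
      using chain_offset_mono[OF \<open>i \<le> k\<close>, of n] by (simp add: chain_offset_Suc)
  qed
qed

text \<open>This is the distance from (0, 0) to p.\<close>
definition chain_pos :: "nat \<times> nat \<Rightarrow> nat" where
  "chain_pos p = chain_offset n (fst p) + min (snd p) (n (fst p) - snd p)"

lemma chain_pos_canon: "i < m \<Longrightarrow> j < n i \<Longrightarrow> chain_pos (vtx i j) = chain_pos (i, j)"
  using n_eq_double_half[of "i - 1"]
  by (cases i) (auto simp: chain_pos_def chain_canon_def chain_offset_Suc)

lemma chain_pos_walk:
  assumes "walk adj k p q"
  shows "chain_pos q \<le> chain_pos p + k"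
proof (rule chain_walk_potential_bound[OF chain_pos_canon _ assms])
  fix i j assume "i < m" "j < n i"
  then consider "j + 1 < n i" | "j + 1 = n i" by linarith
  then show "chain_pos (i, j) \<le> chain_pos (i, (j + 1) mod n i) + 1 \<and>
             chain_pos (i, (j + 1) mod n i) \<le> chain_pos (i, j) + 1"
    by cases (auto simp: chain_pos_def)
qed

definition cycle_dist :: "nat \<Rightarrow> nat \<Rightarrow> nat \<Rightarrow> nat" where
  "cycle_dist N a b = min (if a \<le> b then b - a else a - b) (N - (if a \<le> b then b - a else a - b))"

text \<open>
  Cycle i is entered from the rest of the chain only through its cut vertices (i, 0) and
  (i, n i / 2), so projecting the earlier cycles to the former and the later ones to the latter
  gives a 1-Lipschitz potential.
\<close>
definition cycle_proj_dist :: "nat \<Rightarrow> nat \<Rightarrow> nat \<times> nat \<Rightarrow> nat" where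
  "cycle_proj_dist i a p =
     cycle_dist (n i) a (if fst p < i then 0 else if i < fst p then n i div 2 else snd p)"

lemma cycle_proj_dist_canon:
  assumes "k < m" "j < n k"
  shows "cycle_proj_dist i a (vtx k j) = cycle_proj_dist i a (k, j)"
proof (cases "j = 0 \<and> 0 < k")
  case True
  then obtain l where "k = Suc l" "j = 0" by (cases k) auto
  then show ?thesis by (cases "l = i") (auto simp: cycle_proj_dist_def chain_canon_Suc_0)
qed (auto simp: chain_canon_def)

lemma cycle_proj_dist_walk:
  assumes "i < m" "a < n i" and walk: "walk adj k p q"
  shows "cycle_proj_dist i a q \<le> cycle_proj_dist i a p + k"
proof (rule chain_walk_potential_bound[OF cycle_proj_dist_canon _ walk])
  fix k j assume "k < m" "j < n k"
  show "cycle_proj_dist i a (k, j) \<le> cycle_proj_dist i a (k, (j + 1) mod n k) + 1 \<and>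
        cycle_proj_dist i a (k, (j + 1) mod n k) \<le> cycle_proj_dist i a (k, j) + 1"
  proof (cases "k = i")
    case True
    with \<open>j < n k\<close> consider "j + 1 < n i" | "j + 1 = n i" by fastforce
    then show ?thesis
      using \<open>k = i\<close> assms by cases (auto simp: cycle_proj_dist_def cycle_dist_def)
  qed (auto simp: cycle_proj_dist_def)
qed

lemma cycle_dist_le_walk:
  assumes "i < m" "a < n i" "b < n i" "walk adj k (vtx i a) (vtx i b)"
  shows "cycle_dist (n i) a b \<le> k"
proof -
  have "cycle_proj_dist i a (vtx i b) \<le> cycle_proj_dist i a (vtx i a) + k"
    using cycle_proj_dist_walk[OF assms(1,2,4)] .
  then show ?thesis
    using assms by (simp add: cycle_proj_dist_canon) (simp add: cycle_proj_dist_def cycle_dist_def)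
qed

lemma adj_imp_vertex:
  assumes "adj p w"
  obtains k j where "k < m" "j < n k" "w = vtx k j"
  using assms
proof (cases rule: chain_adjE)
  case (1 i j)
  then show ?thesis using that[of i "(j + 1) mod n i"] by simp
qed (use that in blast)

lemma adj_within_cycle:
  assumes "i < m" "0 < a" "a < n i" "a \<noteq> n i div 2" "adj (i, a) w"
  obtains k where "k < n i" "w = vtx i k"
  using assms(5)
proof (cases rule: chain_adjE)
  case (1 i' j)
  with assms(4) have "i' = i" by (auto simp: chain_canon_def split: if_splits)
  with 1 show ?thesis using that[of "(j + 1) mod n i"] by simp
next
  case (2 i' j)
  with assms(4) have "i' = i" by (auto simp: chain_canon_def split: if_splits)
  with 2 show ?thesis using that by simp
qed

lemma max_distant_antipodal:
  assumes "i < m" "0 < a" "a < n i" "a \<noteq> n i div 2" "0 < b" "b < n i"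
    and antipodal: "cycle_dist (n i) a b = n i div 2"
  shows "max_distant adj (i, a) (i, b)"
  unfolding max_distant_def
proof (intro allI impI)
  fix w assume "adj (i, a) w"
  then obtain k where "k < n i" "w = vtx i k"
    using adj_within_cycle assms by blast
  then obtain l where "l \<le> n i div 2" "walk adj l (i, b) w"
    using cycle_walk_within_half[of i b k] assms by (metis chain_canon_pos)
  then have "gdist adj (i, b) w \<le> n i div 2"
    using gdist_le_walk by fastforce
  moreover obtain l' where "walk adj l' (i, a) (i, b)"
    using cycle_walk_within_half[of i a b] assms by (metis chain_canon_pos)
  then have "n i div 2 \<le> gdist adj (i, a) (i, b)"
    using cycle_dist_le_walk[of i a b] antipodal assms by (auto intro: le_gdistI simp: chain_canon_pos)
  ultimately show "gdist adj (i, b) w \<le> gdist adj (i, a) (i, b)"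
    by linarith
qed

lemma mutually_max_distant_antipodal:
  assumes "i < m" "1 \<le> j" "j < n i div 2"
  shows "mutually_max_distant adj (i, j) (i, j + n i div 2)"
  using assms n_eq_double_half[OF assms(1)] unfolding mutually_max_distant_def
  by (intro conjI max_distant_antipodal) (auto simp: cycle_dist_def)

abbreviation "chain_end \<equiv> (m - 1, n (m - 1) div 2)"

lemma chain_offset_last: "chain_offset n m = chain_offset n (m - 1) + n (m - 1) div 2"
  using chain_offset_Suc[of n "m - 1"] two_le_m by simp

lemma chain_end_canon: "vtx (m - 1) (n (m - 1) div 2) = chain_end"
  using four_le_n[of "m - 1"] two_le_m by (simp add: chain_canon_pos)

lemma walk_to_chain_end:
  assumes "k < m"
  shows "walk adj (chain_offset n m - chain_offset n k) (vtx k 0) chain_end"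
proof -
  have "walk adj (chain_offset n (m - 1) - chain_offset n k + (n (m - 1) div 2 - 0))
          (vtx k 0) (vtx (m - 1) (n (m - 1) div 2))"
    using assms two_le_m four_le_n[of "m - 1"]
    by (intro walk_append[OF walk_along_chain cycle_arc_walk]) auto
  moreover have "chain_offset n (m - 1) - chain_offset n k + (n (m - 1) div 2 - 0) =
      chain_offset n m - chain_offset n k"
    using chain_offset_mono[of k "m - 1" n] assms chain_offset_last by simp
  ultimately show ?thesis
    using chain_end_canon by metis
qed

lemma chain_pos_chain_end: "chain_pos chain_end = chain_offset n m"
  using n_eq_double_half[of "m - 1"] two_le_m by (simp add: chain_pos_def chain_offset_last)

lemma gdist_chain_ends: "gdist adj (0, 0) chain_end = chain_offset n m"
proof (rule antisym)
  have "walk adj (chain_offset n m) (0, 0) chain_end"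
    using walk_to_chain_end[of 0] two_le_m by (simp add: chain_canon_0_0 chain_offset_def)
  then show "gdist adj (0, 0) chain_end \<le> chain_offset n m"
    by (rule gdist_le_walk)
  show "chain_offset n m \<le> gdist adj (0, 0) chain_end"
    using chain_pos_walk chain_pos_chain_end
    by (intro le_gdistI[OF \<open>walk adj _ (0, 0) chain_end\<close>]) (fastforce simp: chain_pos_def chain_offset_def)
qed

lemma gdist_chain_start_le:
  assumes "k < m" "j < n k"
  shows "gdist adj (0, 0) (vtx k j) \<le> chain_offset n m"
proof -
  obtain l where l: "l \<le> n k div 2" "walk adj l (vtx k 0) (vtx k j)"
    using cycle_walk_within_half[of k 0 j] assms four_le_n by force
  have "walk adj (chain_offset n k) (0, 0) (vtx k 0)"
    using walk_along_chain[of 0 k] assms by (simp add: chain_canon_0_0 chain_offset_def)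
  then have walk: "walk adj (chain_offset n k + l) (0, 0) (vtx k j)"
    using l(2) by (rule walk_append)
  have "chain_offset n k + l \<le> chain_offset n m"
    using l(1) chain_offset_mono[of "Suc k" m n] assms by (simp add: chain_offset_Suc)
  with gdist_le_walk[OF walk] show ?thesis by linarith
qed

lemma gdist_chain_end_le:
  assumes "k < m" "j < n k"
  shows "gdist adj chain_end (vtx k j) \<le> chain_offset n m"
proof (cases "k = m - 1")
  case True
  obtain l where "l \<le> n (m - 1) div 2" "walk adj l chain_end (vtx k j)"
    using cycle_walk_within_half[of "m - 1" "n (m - 1) div 2" j] assms True
      four_le_n[of "m - 1"] chain_end_canon by force
  then show ?thesis
    using gdist_le_walk[of adj l] chain_offset_last by fastforce
next
  case False
  obtain l where "l \<le> n k div 2" "walk adj l (vtx k j) (vtx k (n k div 2))"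
    using cycle_walk_within_half[of k j "n k div 2"] assms four_le_n[of k] by force
  moreover have "vtx k (n k div 2) = vtx (Suc k) 0"
    using four_le_n[of k] assms by (simp add: chain_canon_pos chain_canon_Suc_0)
  moreover have "walk adj (chain_offset n m - chain_offset n (Suc k)) (vtx (Suc k) 0) chain_end"
    using walk_to_chain_end False assms by simp
  ultimately have walk: "walk adj (l + (chain_offset n m - chain_offset n (Suc k))) (vtx k j) chain_end"
    using walk_append by metis
  have "l + (chain_offset n m - chain_offset n (Suc k)) \<le> chain_offset n m"
    using \<open>l \<le> n k div 2\<close> chain_offset_Suc[of n k] chain_offset_mono[of "Suc k" m n] assms
    by linarith
  with gdist_le_walk[OF walk_rev[OF walk]] show ?thesis by linarith
qed

lemma mutually_max_distant_chain_ends: "mutually_max_distant adj (0, 0) chain_end"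
  unfolding mutually_max_distant_def max_distant_def
proof (intro conjI allI impI)
  fix w assume "adj (0, 0) w"
  then obtain k j where "k < m" "j < n k" "w = vtx k j"
    by (rule adj_imp_vertex)
  then show "gdist adj chain_end w \<le> gdist adj (0, 0) chain_end"
    using gdist_chain_end_le gdist_chain_ends by simp
next
  fix w assume "adj chain_end w"
  then obtain k j where "k < m" "j < n k" "w = vtx k j"
    by (rule adj_imp_vertex)
  then show "gdist adj (0, 0) w \<le> gdist adj chain_end (0, 0)"
    using gdist_chain_start_le gdist_chain_ends gdist_sym[of adj, OF chain_adj_sym] by simp
qed

definition lower_arcs :: "(nat \<times> nat) set" where
  "lower_arcs = Sigma {..<m} (\<lambda>i. {n i div 2..<n i})"

lemma chain_pos_lower_arc:
  assumes "(i, a) \<in> lower_arcs"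
  shows "chain_pos (i, a) = chain_offset n i + (n i - a)"
proof -
  from assms have "min a (n i - a) = n i - a"
    using n_eq_double_half[of i] by (auto simp: lower_arcs_def)
  then show ?thesis by (simp add: chain_pos_def)
qed

lemma walk_between_lower_arcs:
  assumes u: "(i, a) \<in> lower_arcs" and v: "(k, b) \<in> lower_arcs"
    and "chain_pos (i, a) \<le> chain_pos (k, b)"
  shows "walk adj (chain_pos (k, b) - chain_pos (i, a)) (i, a) (k, b)"
proof -
  from u v have bounds: "i < m" "k < m" "n i div 2 \<le> a" "a < n i" "n k div 2 \<le> b" "b < n k"
    by (auto simp: lower_arcs_def)
  then have "0 < a" "0 < b"
    using four_le_n[of i] four_le_n[of k] by auto
  note pos = chain_pos_lower_arc[OF u] chain_pos_lower_arc[OF v]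
  consider "k = i" | "i < k" | "k < i" by linarith
  then show ?thesis
  proof cases
    case 1
    with pos \<open>chain_pos (i, a) \<le> chain_pos (k, b)\<close> bounds have "b \<le> a" by simp
    with 1 bounds \<open>0 < a\<close> \<open>0 < b\<close> show ?thesis
      using walk_rev[OF cycle_arc_walk[of i b a]] pos by (simp add: chain_canon_pos)
  next
    case 2
    have "walk adj (a - n i div 2) (vtx i a) (vtx (Suc i) 0)"
      using walk_rev[OF cycle_arc_walk[of i "n i div 2" a]] bounds \<open>0 < a\<close>
      by (simp add: chain_canon_Suc_0 chain_canon_pos)
    moreover have "walk adj (chain_offset n k - chain_offset n (Suc i)) (vtx (Suc i) 0) (vtx k 0)"
      using walk_along_chain 2 bounds by simp
    moreover have "walk adj (n k - b) (vtx k 0) (vtx k b)"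
      using walk_rev[OF cycle_wrap_walk] bounds \<open>0 < b\<close> by simp
    ultimately have "walk adj (a - n i div 2 + (chain_offset n k - chain_offset n (Suc i)) + (n k - b))
        (i, a) (k, b)"
      using \<open>0 < a\<close> \<open>0 < b\<close> by (metis walk_append chain_canon_pos)
    moreover have "a - n i div 2 + (chain_offset n k - chain_offset n (Suc i)) + (n k - b) =
        chain_pos (k, b) - chain_pos (i, a)"
      using pos chain_offset_mono[of "Suc i" k n] 2 chain_offset_Suc[of n i]
        n_eq_double_half[of i] bounds by linarith
    ultimately show ?thesis by simp
  next
    case 3
    then have False
      using pos \<open>chain_pos (i, a) \<le> chain_pos (k, b)\<close> chain_offset_mono[of "Suc k" i n]
        chain_offset_Suc[of n k] n_eq_double_half[of k] bounds
      by linarith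
    then show ?thesis ..
  qed
qed

text \<open>
  Stepping from (i, a) towards (0, 0) moves away from a lower-arc vertex (k, b) beyond it along
  that geodesic.
\<close>
lemma not_max_distant_lower_arcs:
  assumes u: "(i, a) \<in> lower_arcs" and v: "(k, b) \<in> lower_arcs"
    and le: "chain_pos (i, a) \<le> chain_pos (k, b)"
  shows "\<not> max_distant adj (i, a) (k, b)"
proof -
  from u have "i < m" "n i div 2 \<le> a" "a < n i" by (auto simp: lower_arcs_def)
  then have "0 < a" using four_le_n[of i] by simp
  define w where "w = vtx i ((a + 1) mod n i)"
  have adj_w: "adj (i, a) w"
    using chain_adj_step[of i m a n] \<open>i < m\<close> \<open>a < n i\<close> \<open>0 < a\<close> by (simp add: w_def chain_canon_pos)
  have pos_w: "chain_pos w + 1 = chain_pos (i, a)"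
  proof -
    have "chain_pos w = chain_pos (i, (a + 1) mod n i)"
      unfolding w_def using \<open>i < m\<close> \<open>a < n i\<close> by (simp add: chain_pos_canon)
    moreover have "chain_pos (i, (a + 1) mod n i) + 1 = chain_pos (i, a)"
    proof (cases "a + 1 < n i")
      case True
      then have "(i, a + 1) \<in> lower_arcs"
        using u by (auto simp: lower_arcs_def)
      with True show ?thesis
        using chain_pos_lower_arc[OF u] chain_pos_lower_arc[of i "a + 1"] by simp
    next
      case False
      with \<open>a < n i\<close> have "a + 1 = n i" by simp
      then show ?thesis
        using chain_pos_lower_arc[OF u] by (simp add: chain_pos_def)
    qed
    ultimately show ?thesis by simp
  qed
  define d where "d = chain_pos (k, b) - chain_pos (i, a)"
  have walk: "walk adj d (i, a) (k, b)"
    unfolding d_def using u v le by (rule walk_between_lower_arcs)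
  have "d < gdist adj (k, b) w"
  proof (rule Suc_le_lessD, rule le_gdistI)
    show "walk adj (Suc d) (k, b) w"
      using walk_rev[OF walk] adj_w by (rule walk_snoc)
    fix l assume "walk adj l (k, b) w"
    then have "chain_pos (k, b) \<le> chain_pos w + l"
      by (rule chain_pos_walk[OF walk_rev])
    with pos_w le show "Suc d \<le> l"
      unfolding d_def by linarith
  qed
  moreover have "gdist adj (i, a) (k, b) \<le> d"
    by (rule gdist_le_walk[OF walk])
  ultimately have "\<not> gdist adj (k, b) w \<le> gdist adj (i, a) (k, b)"
    by linarith
  with adj_w show ?thesis
    unfolding max_distant_def by blast
qed

definition upper_arcs :: "(nat \<times> nat) set" where
  "upper_arcs = Sigma {..<m} (\<lambda>i. {1..<n i div 2})"

lemma card_upper_arcs: "card upper_arcs = (\<Sum>i<m. (n i - 2) div 2)"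
  unfolding upper_arcs_def by (subst card_SigmaI) (auto intro!: sum.cong)

lemma vtx_mem_chain_vertices: "i < m \<Longrightarrow> j < n i \<Longrightarrow> vtx i j \<in> V"
  unfolding chain_vertices_def by auto

lemma finite_chain_vertices: "finite V"
proof -
  have "{(i, j). i < m \<and> j < n i} \<subseteq> {..<m} \<times> {..<Max (n ` {..<m})}"
    by clarsimp (meson Max_ge finite_imageI finite_lessThan imageI lessThan_iff order_less_le_trans)
  then show ?thesis
    unfolding chain_vertices_def by (meson finite_SigmaI finite_lessThan finite_subset finite_imageI)
qed

lemma insert_upper_arcs_subset: "insert (0, 0) upper_arcs \<subseteq> V"
proof -
  have "(i, j) \<in> V" if "(i, j) \<in> upper_arcs" for i j
    using that vtx_mem_chain_vertices[of i j] chain_canon_pos[of j n i] by (auto simp: upper_arcs_def)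
  moreover have "(0, 0) \<in> V"
    using vtx_mem_chain_vertices[of 0 0] two_le_m four_le_n[of 0] by (simp add: chain_canon_0_0)
  ultimately show ?thesis by auto
qed

lemma chain_vertices_subset: "V \<subseteq> insert (0, 0) upper_arcs \<union> lower_arcs"
proof
  fix p assume "p \<in> V"
  then obtain i j where "i < m" "j < n i" "p = vtx i j"
    unfolding chain_vertices_def by auto
  then show "p \<in> insert (0, 0) upper_arcs \<union> lower_arcs"
    using four_le_n[of "i - 1"]
    by (cases i; cases "j = 0") (auto simp: upper_arcs_def lower_arcs_def chain_canon_def)
qed

abbreviation "SR \<equiv> strong_resolving_adj V adj"

lemma is_vertex_cover_upper_arcs: "is_vertex_cover V SR (insert (0, 0) upper_arcs)"
  unfolding is_vertex_cover_def
proof (intro conjI insert_upper_arcs_subset ballI impI)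
  fix u v assume "u \<in> V" "v \<in> V" "SR u v"
  show "u \<in> insert (0, 0) upper_arcs \<or> v \<in> insert (0, 0) upper_arcs"
  proof (rule ccontr)
    assume "\<not> ?thesis"
    then have "u \<in> lower_arcs" "v \<in> lower_arcs"
      using \<open>u \<in> V\<close> \<open>v \<in> V\<close> chain_vertices_subset by auto
    moreover have "max_distant adj u v" "max_distant adj v u"
      using \<open>SR u v\<close> by (auto simp: strong_resolving_adj_def mutually_max_distant_def)
    ultimately show False
      using not_max_distant_lower_arcs by (cases u, cases v) (metis nat_le_linear)
  qed
qed

definition antipodal_matching :: "((nat \<times> nat) \<times> (nat \<times> nat)) set" where
  "antipodal_matching =
     insert ((0, 0), chain_end) ((\<lambda>(i, j). ((i, j), (i, j + n i div 2))) ` upper_arcs)"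

lemma antipodal_matching_subset: "antipodal_matching \<subseteq> V \<times> V"
proof -
  have "(i, j + n i div 2) \<in> V" if "(i, j) \<in> upper_arcs" for i j
    using that vtx_mem_chain_vertices[of i "j + n i div 2"] n_eq_double_half[of i]
    by (auto simp: upper_arcs_def chain_canon_pos)
  moreover have "chain_end \<in> V"
    using vtx_mem_chain_vertices[of "m - 1" "n (m - 1) div 2"] chain_end_canon two_le_m
      four_le_n[of "m - 1"] by simp
  ultimately show ?thesis
    using insert_upper_arcs_subset by (auto simp: antipodal_matching_def)
qed

lemma is_matching_antipodal_matching: "is_matching SR antipodal_matching"
  unfolding is_matching_def
proof (intro conjI ballI impI)
  fix p assume "p \<in> antipodal_matching"
  then show "case p of (u, v) \<Rightarrow> SR u v"
    using antipodal_matching_subset mutually_max_distant_chain_ends mutually_max_distant_antipodal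
    by (auto simp: antipodal_matching_def upper_arcs_def strong_resolving_adj_def)
next
  fix p q assume "p \<in> antipodal_matching" "q \<in> antipodal_matching" "p \<noteq> q"
  then show "{fst p, snd p} \<inter> {fst q, snd q} = {}"
    using two_le_m by (auto simp: antipodal_matching_def upper_arcs_def)
qed

lemma card_antipodal_matching: "card antipodal_matching = card (insert (0, 0) upper_arcs)"
proof -
  have "inj_on (\<lambda>(i, j). ((i, j), (i, j + n i div 2))) upper_arcs"
    by (auto intro: inj_onI)
  moreover have "((0, 0), chain_end) \<notin> (\<lambda>(i, j). ((i, j), (i, j + n i div 2))) ` upper_arcs"
    "(0, 0) \<notin> upper_arcs"
    by (auto simp: upper_arcs_def)
  moreover have "finite upper_arcs"
    by (simp add: upper_arcs_def)
  ultimately show ?thesis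
    by (simp add: antipodal_matching_def card_image)
qed

theorem vertex_cover_number_strong_resolving_graph:
  "vertex_cover_number V SR = 1 + (\<Sum>i<m. (n i - 2) div 2)"
proof -
  have "vertex_cover_number V SR = card (insert (0, 0) upper_arcs)"
  proof (rule vertex_cover_number_eqI[OF finite_chain_vertices is_vertex_cover_upper_arcs])
    fix S assume "is_vertex_cover V SR S"
    then show "card (insert (0, 0) upper_arcs) \<le> card S"
      using card_matching_le_vertex_cover[OF _ finite_chain_vertices antipodal_matching_subset
          is_matching_antipodal_matching] card_antipodal_matching by simp
  qed
  also have "\<dots> = 1 + (\<Sum>i<m. (n i - 2) div 2)"
    using card_upper_arcs by (simp add: upper_arcs_def)
  finally show ?thesis .
qed

end

theorem lemma3p4:
  fixes m :: nat and n :: "nat \<Rightarrow> nat"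
  assumes "m \<ge> 2"
    and "\<forall>i<m. n i \<ge> 4 \<and> even (n i)"
  shows "vertex_cover_number (chain_vertices m n)
           (strong_resolving_adj (chain_vertices m n) (chain_adj m n))
         = 1 + (\<Sum>i<m. (n i - 2) div 2)"
proof -
  interpret even_chain_cycle m n
    using assms by unfold_locales
  show ?thesis
    by (rule vertex_cover_number_strong_resolving_graph)
qed

end
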